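(* $\limsup_{t\to\infty} r_t \leq 2\sqrt{6}-4$.
   Context: Let $t$ be a positive integer (the number of topics). A voter matrix with $t$ topics is a matrix $V\in\{Y,N\}^{n\times t}$ for some positive integer $n$ (rows are voters), subject to the standing assumption that in every column the number of entries $Y$ is at least the number of entries $N$. $\mathcal{V}_t$ is the set of all voter matrices with $t$ topics and any number of voters. A proposal is a vector $p\in\{Y,N\}^t$. A voter $v$ supports $p$ if the Hamming distance between $v$ and $p$ is at most $t/2$; $p$ is supported by $V$ if at least $n/2$ rows of $V$ support $p$. For $i=1,\dots,t$ let $m_i$ be the fraction of entries $Y$ in column $i$ of $V$, and $m_V=\frac1t\sum_i m_i$. For a proposal $p$ let $m_i'=m_i$ if $p_i=Y$ and $m_i'=1-m_i$ if $p_i=N$; set $R_p=\frac1t\sum_i m_i'$ and $r_p=R_p/m_V$. Let $r_V=\max r_p$, the maximum over all proposals $p$ supported by $V$, and $r_t=\inf_{V\in\mathcal{V}_t} r_V$. *)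

theory Defs
  imports Complex_Main "HOL-Library.Extended_Real"
begin

text \<open>A voter matrix with t topics and n voters: V i j (i < n, j < t); True = Y, False = N.
  Entries outside the range are irrelevant. A proposal p is given as the set of topics j < t
  on which it says Y.\<close>

definition voter_matrix :: "nat \<Rightarrow> nat \<Rightarrow> (nat \<Rightarrow> nat \<Rightarrow> bool) \<Rightarrow> bool" where
  "voter_matrix t n V \<longleftrightarrow> n > 0 \<and>
     (\<forall>j<t. card {i. i < n \<and> \<not> V i j} \<le> card {i. i < n \<and> V i j})"

definition hamming :: "nat \<Rightarrow> (nat \<Rightarrow> bool) \<Rightarrow> nat set \<Rightarrow> nat" where
  "hamming t v p = card {j. j < t \<and> v j \<noteq> (j \<in> p)}"

definition supports :: "nat \<Rightarrow> (nat \<Rightarrow> bool) \<Rightarrow> nat set \<Rightarrow> bool" where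
  "supports t v p \<longleftrightarrow> real (hamming t v p) \<le> real t / 2"

definition supported :: "nat \<Rightarrow> nat \<Rightarrow> (nat \<Rightarrow> nat \<Rightarrow> bool) \<Rightarrow> nat set \<Rightarrow> bool" where
  "supported t n V p \<longleftrightarrow> real (card {i. i < n \<and> supports t (V i) p}) \<ge> real n / 2"

definition col_frac :: "nat \<Rightarrow> (nat \<Rightarrow> nat \<Rightarrow> bool) \<Rightarrow> nat \<Rightarrow> real" where
  "col_frac n V j = real (card {i. i < n \<and> V i j}) / real n"

definition m_V :: "nat \<Rightarrow> nat \<Rightarrow> (nat \<Rightarrow> nat \<Rightarrow> bool) \<Rightarrow> real" where
  "m_V t n V = (\<Sum>j<t. col_frac n V j) / real t"

definition R_p :: "nat \<Rightarrow> nat \<Rightarrow> (nat \<Rightarrow> nat \<Rightarrow> bool) \<Rightarrow> nat set \<Rightarrow> real" where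
  "R_p t n V p = (\<Sum>j<t. if j \<in> p then col_frac n V j else 1 - col_frac n V j) / real t"

definition r_p :: "nat \<Rightarrow> nat \<Rightarrow> (nat \<Rightarrow> nat \<Rightarrow> bool) \<Rightarrow> nat set \<Rightarrow> real" where
  "r_p t n V p = R_p t n V p / m_V t n V"

definition r_V :: "nat \<Rightarrow> nat \<Rightarrow> (nat \<Rightarrow> nat \<Rightarrow> bool) \<Rightarrow> real" where
  "r_V t n V = Max (r_p t n V ` {p. p \<subseteq> {..<t} \<and> supported t n V p})"

definition r_t :: "nat \<Rightarrow> real" where
  "r_t t = Inf {r_V t n V | n V. voter_matrix t n V}"

end

(* Take n = 2t - 1 voters: t - 1 of them vote Y on every topic, the other t are the cyclic
   shifts of a ballot with Y on k ~ s t consecutive topics. Every column then has the same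
   fraction m = (k + t - 1) / (2t - 1) of Y entries. A supported proposal has at least t
   supporters, hence one among the shifted ballots, so it says Y on at most k + t/2 topics;
   as R_p grows linearly with that number, r_V is at most about (1 + 2 s^2) / (1 + s) for
   large t. This is minimal for s = sqrt 6 / 2 - 1, where it equals 2 sqrt 6 - 4. *)

theory Submission
  imports Defs
begin

lemma bij_betw_add_mod: "bij_betw (\<lambda>x. (x + c) mod t) {..<t} {..<(t::nat)}"
proof (cases "t = 0")
  case False
  have "inj_on (\<lambda>x. (x + c) mod t) {..<t}"
  proof (rule inj_onI)
    fix x y
    assume "x \<in> {..<t}" "y \<in> {..<t}" "(x + c) mod t = (y + c) mod t"
    then have "t dvd nat \<bar>int x - int y\<bar>" "nat \<bar>int x - int y\<bar> < t"
      using mod_eq_iff_dvd_symdiff_nat[of "x + c" t "y + c"] by auto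
    then have "nat \<bar>int x - int y\<bar> = 0"
      by (metis nat_dvd_not_less neq0_conv)
    then show "x = y"
      by simp
  qed
  moreover have "(\<lambda>x. (x + c) mod t) ` {..<t} \<subseteq> {..<t}"
    using False by auto
  ultimately show ?thesis
    by (simp add: bij_betw_def endo_inj_surj)
qed (simp add: bij_betw_def)

lemma card_add_mod_less:
  assumes "k \<le> t"
  shows "card {x. x < t \<and> (x + c) mod t < k} = k"
proof -
  let ?f = "\<lambda>x. (x + c) mod t"
  have bij: "bij_betw ?f {..<t} {..<t}"
    by (rule bij_betw_add_mod)
  have "?f ` {x. x < t \<and> ?f x < k} = {y \<in> ?f ` {..<t}. y < k}"
    by auto
  also have "\<dots> = {..<k}"
    using bij_betw_imp_surj_on[OF bij] assms by auto
  finally have "bij_betw ?f {x. x < t \<and> ?f x < k} {..<k}"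
    by (intro bij_betw_subset[OF bij]) auto
  then show ?thesis
    by (simp add: bij_betw_same_card)
qed

lemma card_lessThan_filter_add_not:
  "card {i. i < n \<and> P i} + card {i. i < n \<and> \<not> P i} = (n::nat)"
proof -
  have "card {i. i < n \<and> P i} + card {i. i < n \<and> \<not> P i}
      = card ({i. i < n \<and> P i} \<union> {i. i < n \<and> \<not> P i})"
    by (rule card_Un_disjoint[symmetric]) auto
  also have "{i. i < n \<and> P i} \<union> {i. i < n \<and> \<not> P i} = {..<n}"
    by auto
  finally show ?thesis
    by simp
qed

lemma hamming_add_hamming_complement: "hamming t v p + hamming t v ({..<t} - p) = t"
proof -
  have "hamming t v ({..<t} - p) = card {j. j < t \<and> \<not> v j \<noteq> (j \<in> p)}"
    unfolding hamming_def by (rule arg_cong[where f = card]) auto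
  then show ?thesis
    unfolding hamming_def by (simp only: card_lessThan_filter_add_not)
qed

lemma ex_supported_proposal: "\<exists>p \<subseteq> {..<t}. supported t n V p"
proof -
  let ?supp = "\<lambda>p. {i. i < n \<and> supports t (V i) p}"
  have "supports t (V i) {} \<or> supports t (V i) {..<t}" for i
    using hamming_add_hamming_complement[of t "V i" "{}"] unfolding supports_def by simp linarith
  then have "{..<n} \<subseteq> ?supp {} \<union> ?supp {..<t}"
    by auto
  then have "n \<le> card (?supp {} \<union> ?supp {..<t})"
    using card_mono[of "?supp {} \<union> ?supp {..<t}" "{..<n}"] by auto
  also have "\<dots> \<le> card (?supp {}) + card (?supp {..<t})"
    by (rule card_Un_le)
  finally have "n \<le> card (?supp {}) + card (?supp {..<t})" .
  then have "supported t n V {} \<or> supported t n V {..<t}"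
    unfolding supported_def by linarith
  then show ?thesis
    by blast
qed

lemma col_frac_nonneg: "0 \<le> col_frac n V j"
  by (simp add: col_frac_def)

lemma col_frac_le_1: "col_frac n V j \<le> 1"
proof -
  have "card {i. i < n \<and> V i j} \<le> n"
    using card_mono[of "{..<n}" "{i. i < n \<and> V i j}"] by auto
  then show ?thesis
    by (auto simp: col_frac_def divide_le_eq_1)
qed

lemma r_p_nonneg: "0 \<le> r_p t n V p"
  unfolding r_p_def R_p_def m_V_def
  using col_frac_nonneg col_frac_le_1 by (intro divide_nonneg_nonneg sum_nonneg) auto

lemma finite_supported_proposals: "finite {p. p \<subseteq> {..<t} \<and> supported t n V p}"
  by (rule finite_subset[of _ "Pow {..<t}"]) auto

lemma r_V_nonneg: "0 \<le> r_V t n V"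
proof -
  obtain p where "p \<subseteq> {..<t}" "supported t n V p"
    using ex_supported_proposal by blast
  then have "r_p t n V p \<le> r_V t n V"
    unfolding r_V_def by (intro Max_ge finite_imageI finite_supported_proposals) auto
  then show ?thesis
    using r_p_nonneg[of t n V p] by linarith
qed

lemma r_t_le_r_V: "voter_matrix t n V \<Longrightarrow> r_t t \<le> r_V t n V"
  unfolding r_t_def by (rule cInf_lower) (auto intro: bdd_belowI[of _ 0] r_V_nonneg)

lemma m_V_uniform_columns:
  assumes "0 < t" "\<forall>j<t. col_frac n V j = m"
  shows "m_V t n V = m"
  using assms by (simp add: m_V_def)

lemma R_p_uniform_columns:
  assumes "0 < t" "p \<subseteq> {..<t}" "\<forall>j<t. col_frac n V j = m"
  shows "R_p t n V p = (1 - m) + real (card p) / real t * (2 * m - 1)"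
proof -
  have "(\<Sum>j<t. if j \<in> p then col_frac n V j else 1 - col_frac n V j)
      = (\<Sum>j<t. (1 - m) + (if j \<in> p then 2 * m - 1 else 0))"
    using assms(3) by (intro sum.cong) auto
  also have "\<dots> = real t * (1 - m) + real (card p) * (2 * m - 1)"
    using assms(2) by (simp add: sum.distrib sum.If_cases Int_absorb1)
  finally show ?thesis
    using assms(1) by (simp add: R_p_def field_simps)
qed

lemma r_V_le_uniform_columns:
  assumes "0 < t" "\<forall>j<t. col_frac n V j = m" "1/2 \<le> m"
    and card_le: "\<And>p. p \<subseteq> {..<t} \<Longrightarrow> supported t n V p \<Longrightarrow> real (card p) \<le> c"
  shows "r_V t n V \<le> ((1 - m) + c / real t * (2 * m - 1)) / m"
  unfolding r_V_def
proof (rule Max.boundedI)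
  show "finite (r_p t n V ` {p. p \<subseteq> {..<t} \<and> supported t n V p})"
    by (intro finite_imageI finite_supported_proposals)
  show "r_p t n V ` {p. p \<subseteq> {..<t} \<and> supported t n V p} \<noteq> {}"
    using ex_supported_proposal by blast
next
  fix r assume "r \<in> r_p t n V ` {p. p \<subseteq> {..<t} \<and> supported t n V p}"
  then obtain p where p: "p \<subseteq> {..<t}" "supported t n V p" and r: "r = r_p t n V p"
    by blast
  have "real (card p) / real t * (2 * m - 1) \<le> c / real t * (2 * m - 1)"
    using card_le[OF p] assms(1,3) by (intro mult_right_mono divide_right_mono) auto
  then show "r \<le> ((1 - m) + c / real t * (2 * m - 1)) / m"
    unfolding r r_p_def m_V_uniform_columns[OF assms(1,2)] R_p_uniform_columns[OF assms(1) p(1) assms(2)]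
    using assms(3) by (intro divide_right_mono) auto
qed

definition cyclic_voters :: "nat \<Rightarrow> nat \<Rightarrow> nat \<Rightarrow> nat \<Rightarrow> bool" where
  "cyclic_voters t k i j \<longleftrightarrow> t \<le> i \<or> (i + j) mod t < k"

lemma card_cyclic_voters_column:
  assumes "k \<le> t"
  shows "card {i. i < 2 * t - 1 \<and> cyclic_voters t k i j} = k + (t - 1)"
proof -
  have "{i. i < 2 * t - 1 \<and> cyclic_voters t k i j} = {i. i < t \<and> (i + j) mod t < k} \<union> {t..<2 * t - 1}"
    by (auto simp: cyclic_voters_def)
  also have "card \<dots> = card {i. i < t \<and> (i + j) mod t < k} + card {t..<2 * t - 1}"
    by (rule card_Un_disjoint) auto
  also have "\<dots> = k + (t - 1)"
    using assms by (simp add: card_add_mod_less)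
  finally show ?thesis .
qed

definition cyclic_yes_fraction :: "nat \<Rightarrow> nat \<Rightarrow> real" where
  "cyclic_yes_fraction t k = (real k + real t - 1) / (2 * real t - 1)"

lemma col_frac_cyclic_voters:
  assumes "0 < t" "k \<le> t"
  shows "col_frac (2 * t - 1) (cyclic_voters t k) j = cyclic_yes_fraction t k"
proof -
  have "real (k + (t - 1)) = real k + real t - 1" "real (2 * t - 1) = 2 * real t - 1"
    using assms(1) by (simp_all add: of_nat_diff)
  then show ?thesis
    unfolding col_frac_def cyclic_yes_fraction_def card_cyclic_voters_column[OF assms(2)] by simp
qed

lemma voter_matrix_cyclic_voters:
  assumes "1 \<le> k" "k \<le> t"
  shows "voter_matrix t (2 * t - 1) (cyclic_voters t k)"
proof -
  have "card {i. i < 2 * t - 1 \<and> \<not> cyclic_voters t k i j} \<le> card {i. i < 2 * t - 1 \<and> cyclic_voters t k i j}" for j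
    using card_lessThan_filter_add_not[of "2 * t - 1" "\<lambda>i. cyclic_voters t k i j"]
      card_cyclic_voters_column[OF assms(2), of j] assms by linarith
  then show ?thesis
    using assms unfolding voter_matrix_def by simp
qed

lemma card_supported_cyclic_voters_le:
  assumes "0 < t" "k \<le> t" "p \<subseteq> {..<t}" "supported t (2 * t - 1) (cyclic_voters t k) p"
  shows "real (card p) \<le> real k + real t / 2"
proof -
  have "\<exists>i<t. supports t (cyclic_voters t k i) p"
  proof (rule ccontr)
    assume "\<not> ?thesis"
    then have "{i. i < 2 * t - 1 \<and> supports t (cyclic_voters t k i) p} \<subseteq> {t..<2 * t - 1}"
      by (auto simp: not_less)
    then have "card {i. i < 2 * t - 1 \<and> supports t (cyclic_voters t k i) p} \<le> t - 1"
      using card_mono[of "{t..<2 * t - 1}"] by fastforce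
    then show False
      using assms(1,4) unfolding supported_def by linarith
  qed
  then obtain i where i: "i < t" "supports t (cyclic_voters t k i) p"
    by blast
  let ?yes = "{j. j < t \<and> (j + i) mod t < k}"
  have "p - ?yes \<subseteq> {j. j < t \<and> cyclic_voters t k i j \<noteq> (j \<in> p)}"
    using assms(3) i(1) by (auto simp: cyclic_voters_def add.commute)
  then have "card (p - ?yes) \<le> hamming t (cyclic_voters t k i) p"
    unfolding hamming_def by (intro card_mono) auto
  moreover have "card p \<le> card ?yes + card (p - ?yes)"
    using card_Int_Diff[of p ?yes] card_mono[of ?yes "p \<inter> ?yes"] finite_subset[OF assms(3)] by auto
  moreover have "card ?yes = k"
    using assms(2) by (rule card_add_mod_less)
  ultimately have "real (card p) \<le> real k + real (hamming t (cyclic_voters t k i) p)"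
    by linarith
  then show ?thesis
    using i(2) unfolding supports_def by linarith
qed

definition cyclic_bound :: "nat \<Rightarrow> nat \<Rightarrow> real" where
  "cyclic_bound t k = ((1 - cyclic_yes_fraction t k)
     + (real k / real t + 1/2) * (2 * cyclic_yes_fraction t k - 1)) / cyclic_yes_fraction t k"

lemma r_V_cyclic_voters_le:
  assumes "1 \<le> k" "k \<le> t"
  shows "r_V t (2 * t - 1) (cyclic_voters t k) \<le> cyclic_bound t k"
proof -
  have t: "0 < t"
    using assms by simp
  have "1/2 \<le> cyclic_yes_fraction t k"
    using assms by (simp add: cyclic_yes_fraction_def field_simps)
  from r_V_le_uniform_columns[OF t _ this card_supported_cyclic_voters_le[OF t assms(2)]]
  have "r_V t (2 * t - 1) (cyclic_voters t k) \<le> ((1 - cyclic_yes_fraction t k)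
      + (real k + real t / 2) / real t * (2 * cyclic_yes_fraction t k - 1)) / cyclic_yes_fraction t k"
    using col_frac_cyclic_voters[OF t assms(2)] by blast
  also have "(real k + real t / 2) / real t = real k / real t + 1/2"
    using t by (simp add: field_simps)
  finally show ?thesis
    unfolding cyclic_bound_def .
qed

lemma tendsto_nat_floor_mult_div:
  assumes "0 \<le> s"
  shows "(\<lambda>n. real (nat \<lfloor>s * real n\<rfloor>) / real n) \<longlonglongrightarrow> s"
proof (rule tendsto_sandwich[of "\<lambda>n. s - 1 / real n" _ _ "\<lambda>_. s"])
  have floor: "real (nat \<lfloor>s * real n\<rfloor>) = of_int \<lfloor>s * real n\<rfloor>" for n
    using assms by simp
  show "\<forall>\<^sub>F n in sequentially. s - 1 / real n \<le> real (nat \<lfloor>s * real n\<rfloor>) / real n"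
    using eventually_gt_at_top[of "0::nat"]
  proof eventually_elim
    case (elim n)
    have "s * real n - 1 \<le> real (nat \<lfloor>s * real n\<rfloor>)"
      unfolding floor by linarith
    then have "(s * real n - 1) / real n \<le> real (nat \<lfloor>s * real n\<rfloor>) / real n"
      by (rule divide_right_mono) simp
    then show ?case
      using elim by (simp add: diff_divide_distrib)
  qed
  show "\<forall>\<^sub>F n in sequentially. real (nat \<lfloor>s * real n\<rfloor>) / real n \<le> s"
    using eventually_gt_at_top[of "0::nat"]
  proof eventually_elim
    case (elim n)
    have "real (nat \<lfloor>s * real n\<rfloor>) \<le> s * real n"
      unfolding floor by linarith
    then show ?case
      using elim by (simp add: field_simps)
  qed
  show "(\<lambda>n. s - 1 / real n) \<longlonglongrightarrow> s"
    using tendsto_diff[OF tendsto_const lim_inverse_n', of s] by simp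
qed simp

lemma cyclic_yes_fraction_tendsto:
  assumes "(\<lambda>t. real (k t) / real t) \<longlonglongrightarrow> s"
  shows "(\<lambda>t. cyclic_yes_fraction t (k t)) \<longlonglongrightarrow> (1 + s) / 2"
proof -
  have "(\<lambda>t. (real (k t) / real t + 1 - 1 / real t) / (2 - 1 / real t)) \<longlonglongrightarrow> (s + 1 - 0) / (2 - 0)"
    by (intro tendsto_intros assms lim_inverse_n') simp
  moreover have "\<forall>\<^sub>F t in sequentially.
      (real (k t) / real t + 1 - 1 / real t) / (2 - 1 / real t) = cyclic_yes_fraction t (k t)"
    using eventually_gt_at_top[of "0::nat"]
  proof eventually_elim
    case (elim t)
    then have "1 \<le> real t"
      by simp
    then show ?case
      unfolding cyclic_yes_fraction_def by (simp add: field_simps)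
  qed
  ultimately show ?thesis
    by (simp add: tendsto_cong add.commute)
qed

lemma cyclic_bound_tendsto:
  assumes lim: "(\<lambda>t. real (k t) / real t) \<longlonglongrightarrow> s" and "0 \<le> s"
  shows "(\<lambda>t. cyclic_bound t (k t)) \<longlonglongrightarrow> (1 + 2 * s\<^sup>2) / (1 + s)"
proof -
  let ?M = "(1 + s) / 2"
  have "(\<lambda>t. cyclic_bound t (k t)) \<longlonglongrightarrow> ((1 - ?M) + (s + 1/2) * (2 * ?M - 1)) / ?M"
    unfolding cyclic_bound_def using assms(2)
    by (intro tendsto_intros cyclic_yes_fraction_tendsto lim) auto
  also have "((1 - ?M) + (s + 1/2) * (2 * ?M - 1)) / ?M = (1 + 2 * s\<^sup>2) / (1 + s)"
    using assms(2) by (simp add: field_simps power2_eq_square)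
  finally show ?thesis .
qed

theorem theorem5p6:
  shows "limsup (\<lambda>t. ereal (r_t t)) \<le> ereal (2 * sqrt 6 - 4)"
proof -
  define s :: real where "s = sqrt 6 / 2 - 1"
  define k where "k t = nat \<lfloor>s * real t\<rfloor>" for t
  have "2 < sqrt 6" "sqrt 6 < 4"
    by (simp_all add: real_less_rsqrt real_less_lsqrt)
  then have s: "0 < s" "s < 1"
    unfolding s_def by simp_all
  have lim: "(\<lambda>t. real (k t) / real t) \<longlonglongrightarrow> s"
    unfolding k_def using s by (intro tendsto_nat_floor_mult_div) simp
  have "\<forall>\<^sub>F t in sequentially. 1 \<le> k t \<and> k t \<le> t"
    using order_tendstoD(1)[OF lim s(1)] order_tendstoD(2)[OF lim s(2)]
    by eventually_elim (auto simp: zero_less_divide_iff divide_less_eq)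
  then have "\<forall>\<^sub>F t in sequentially. ereal (r_t t) \<le> ereal (cyclic_bound t (k t))"
    by eventually_elim (meson order.trans ereal_less_eq(3) r_t_le_r_V voter_matrix_cyclic_voters r_V_cyclic_voters_le)
  then have "limsup (\<lambda>t. ereal (r_t t)) \<le> limsup (\<lambda>t. ereal (cyclic_bound t (k t)))"
    by (rule Limsup_mono)
  also have "\<dots> = ereal ((1 + 2 * s\<^sup>2) / (1 + s))"
    using cyclic_bound_tendsto[OF lim] s by (intro lim_imp_Limsup) simp_all
  also have "(1 + 2 * s\<^sup>2) / (1 + s) = 2 * sqrt 6 - 4"
    unfolding s_def by (simp add: field_simps power2_eq_square)
  finally show ?thesis .
qed

end
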